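(* Let $q$ be a prime power with $q\equiv1\pmod 4$ and let $P_q=\Gamma(\mathbb{F}_q,S)$ be the Paley graph, where $S$ is the set of nonzero quadratic residues in $\mathbb{F}_q$. Then $\Theta_{\mathrm{lin}}(P_q)=\sqrt q$. In particular, $\Theta_{\mathrm{lin}}(C_5)=\sqrt5$, where $C_5$ is the $5$-cycle (identified with $P_5$).
   Context: For a symmetric set $S\subseteq\mathbb{F}_q\setminus\{0\}$ ($S=-S$), the Cayley graph $\Gamma(\mathbb{F}_q,S)$ has vertex set $\mathbb{F}_q$, with $u\sim v$ iff $u-v\in S$. $G^k$ is the $k$-fold strong product: vertex set $\mathbb{F}_q^k$, distinct vertices adjacent iff in each coordinate they are equal or adjacent in $G$. $\alpha_{\mathrm{lin}}(G^k)$ is the largest size of an independent set of $G^k$ that is a linear subspace of $\mathbb{F}_q^k$, and the linear Shannon capacity is $\Theta_{\mathrm{lin}}(G)=\sup_k\alpha_{\mathrm{lin}}(G^k)^{1/k}$. *)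

theory Defs
  imports Complex_Main
begin

text \<open>Vectors of F^k are represented as functions nat => 'a vanishing outside {..<k}.\<close>
definition vecs :: "nat \<Rightarrow> (nat \<Rightarrow> 'a::zero) set" where
  "vecs k = {v. \<forall>i\<ge>k. v i = 0}"

text \<open>Adjacency in the k-fold strong product of the Cayley graph Gamma(F, S).\<close>
definition strong_adj :: "'a::ab_group_add set \<Rightarrow> nat \<Rightarrow> (nat \<Rightarrow> 'a) \<Rightarrow> (nat \<Rightarrow> 'a) \<Rightarrow> bool" where
  "strong_adj S k u v \<longleftrightarrow> u \<noteq> v \<and> (\<forall>i<k. u i = v i \<or> u i - v i \<in> S)"

definition indep_set :: "'a::ab_group_add set \<Rightarrow> nat \<Rightarrow> (nat \<Rightarrow> 'a) set \<Rightarrow> bool" where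
  "indep_set S k U \<longleftrightarrow> (\<forall>u\<in>U. \<forall>v\<in>U. \<not> strong_adj S k u v)"

definition lin_subspace :: "nat \<Rightarrow> (nat \<Rightarrow> 'a::field) set \<Rightarrow> bool" where
  "lin_subspace k U \<longleftrightarrow> U \<subseteq> vecs k \<and> (\<lambda>i. 0) \<in> U
     \<and> (\<forall>u\<in>U. \<forall>v\<in>U. (\<lambda>i. u i + v i) \<in> U)
     \<and> (\<forall>c. \<forall>u\<in>U. (\<lambda>i. c * u i) \<in> U)"

definition alpha_lin :: "'a::field set \<Rightarrow> nat \<Rightarrow> nat" where
  "alpha_lin S k = Max {card U | U. lin_subspace k U \<and> indep_set S k U}"

definition Theta_lin :: "'a::field set \<Rightarrow> real" where
  "Theta_lin S = (SUP k\<in>{1..}. real (alpha_lin S k) powr (1 / real k))"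

definition paley_set :: "'a::field set" where
  "paley_set = {x. x \<noteq> 0 \<and> (\<exists>y. x = y ^ 2)}"

end

theory Submission
  imports Defs "HOL-Computational_Algebra.Polynomial" "HOL-Library.Cardinality"
begin

text \<open>
  Write \<open>q = 2m + 1\<close>. By Euler's criterion every nonzero non-residue \<open>x\<close> satisfies
  \<open>x^m = -1\<close>, so on an independent linear subspace \<open>U\<close> of dimension \<open>d\<close> the polynomial
  \<open>prod_i (1 + u_i^m)\<close> vanishes except at \<open>u = 0\<close>, and its sum over \<open>U\<close> is \<open>1\<close>. But a monomial
  of degree below \<open>d(q - 1)\<close> sums to \<open>0\<close> over a \<open>d\<close>-dimensional subspace (split off a line and use
  \<open>sum_t t^j = 0\<close> for \<open>j < q - 1\<close>), so \<open>km \<ge> d(q - 1) = 2dm\<close>, i.e. \<open>|U|^2 \<le> q^k\<close>.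
  For \<open>k = 2\<close> the bound \<open>q\<close> is attained by the line \<open>{(x, gx)}\<close> through a non-residue \<open>g\<close>.
\<close>

section \<open>Finite fields\<close>

lemma card_power_eq_le:
  fixes c :: "'a::field"
  assumes "n \<ge> 1"
  shows "card {x. x ^ n = c} \<le> n"
proof -
  define p where "p = monom (1::'a) n - [:c:]"
  have "coeff p n = 1" using assms by (cases n) (auto simp: p_def coeff_monom)
  hence "p \<noteq> 0" by auto
  moreover have "degree p \<le> n"
    unfolding p_def by (rule degree_diff_le) (auto simp: degree_monom_le)
  moreover have "{x. poly p x = 0} = {x. x ^ n = c}"
    by (auto simp: p_def poly_monom)
  ultimately show ?thesis using card_poly_roots_bound[of p] by simp
qed

lemma of_nat_CARD_eq_0: "of_nat CARD('a) = (0::'a::{finite,field})"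
proof -
  have "(\<Sum>s\<in>(UNIV::'a set). s + 1) = (\<Sum>s\<in>UNIV. s)"
    by (rule sum.reindex_bij_witness[where i="\<lambda>s. s - 1" and j="\<lambda>s. s + 1"]) auto
  thus ?thesis by (simp add: sum.distrib)
qed

lemma card_nonzero_eq: "card {x::'a::{finite,field}. x \<noteq> 0} = CARD('a) - 1"
proof -
  have "{x::'a. x \<noteq> 0} = UNIV - {0}" by auto
  thus ?thesis by (simp add: card_Diff_subset)
qed

lemma CARD_field_ge_2: "card (UNIV :: 'a::{finite,field} set) \<ge> 2"
proof -
  have "card {0, 1::'a} \<le> CARD('a)" by (rule card_mono) auto
  thus ?thesis by simp
qed

lemma power_CARD_minus_1:
  fixes x :: "'a::{finite,field}"
  assumes "x \<noteq> 0"
  shows "x ^ (CARD('a) - 1) = 1"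
proof -
  let ?N = "{s::'a. s \<noteq> 0}"
  have "(\<Prod>s\<in>?N. x * s) = (\<Prod>s\<in>?N. s)"
    by (rule prod.reindex_bij_witness[where i="\<lambda>s. s / x" and j="\<lambda>s. x * s"]) (use assms in auto)
  hence "x ^ card ?N * (\<Prod>s\<in>?N. s) = (\<Prod>s\<in>?N. s)"
    by (simp add: prod.distrib)
  thus ?thesis by (simp add: card_nonzero_eq)
qed

text \<open>The case \<open>j = 0\<close> relies on \<open>0\<^sup>0 = 1\<close> and on the characteristic dividing \<open>q\<close>.\<close>

lemma sum_power_eq_0:
  assumes "j < CARD('a) - 1"
  shows "(\<Sum>t\<in>UNIV. t ^ j) = (0::'a::{finite,field})"
proof (cases "j = 0")
  case True
  thus ?thesis using of_nat_CARD_eq_0 by simp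
next
  case False
  have "card {x::'a. x ^ j = 1} < card {x::'a. x \<noteq> 0}"
    using False assms card_power_eq_le[of j "1::'a"] by (simp add: card_nonzero_eq)
  hence "\<not> {x::'a. x \<noteq> 0} \<subseteq> {x. x ^ j = 1}"
    by (meson card_mono finite leD)
  then obtain g :: 'a where g: "g \<noteq> 0" "g ^ j \<noteq> 1" by auto
  have "(\<Sum>t\<in>UNIV. (g * t) ^ j) = (\<Sum>t\<in>UNIV. t ^ j)"
    by (rule sum.reindex_bij_witness[where i="\<lambda>s. s / g" and j="\<lambda>s. g * s"]) (use g in auto)
  hence "g ^ j * (\<Sum>t\<in>UNIV. t ^ j) = (\<Sum>t\<in>UNIV. t ^ j)"
    by (simp add: power_mult_distrib sum_distrib_left mult.commute)
  hence "(g ^ j - 1) * (\<Sum>t\<in>UNIV. t ^ j) = 0"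
    by (simp add: algebra_simps)
  thus ?thesis using g by simp
qed

section \<open>Quadratic residues\<close>

lemma paley_set_eq_roots:
  assumes q: "card (UNIV :: 'a::{finite,field} set) = 2 * m + 1"
  shows "(paley_set :: 'a set) = {x. x ^ m = 1}"
proof (rule card_seteq)
  have m: "m \<ge> 1" using CARD_field_ge_2[where 'a='a] q by simp
  show "paley_set \<subseteq> {x::'a. x ^ m = 1}"
  proof
    fix x :: 'a assume "x \<in> paley_set"
    then obtain y where "y \<noteq> 0" "x = y ^ 2" by (auto simp: paley_set_def)
    thus "x \<in> {x. x ^ m = 1}"
      using power_CARD_minus_1[of y] q by (simp add: power_mult[symmetric])
  qed
  have "2 * m = card {y::'a. y \<noteq> 0}" using q by (simp add: card_nonzero_eq)
  also have "\<dots> \<le> card (\<Union>c\<in>paley_set. {y::'a. y ^ 2 = c})"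
    by (rule card_mono) (auto simp: paley_set_def)
  also have "\<dots> \<le> (\<Sum>c\<in>paley_set. card {y::'a. y ^ 2 = c})"
    by (rule card_UN_le) simp
  also have "\<dots> \<le> (\<Sum>c\<in>(paley_set :: 'a set). 2)"
    by (rule sum_mono) (rule card_power_eq_le, simp)
  finally have "m \<le> card (paley_set :: 'a set)" by simp
  thus "card {x::'a. x ^ m = 1} \<le> card (paley_set :: 'a set)"
    using card_power_eq_le[OF m, of "1::'a"] by linarith
qed simp

lemma power_half_nonresidue:
  fixes x :: "'a::{finite,field}"
  assumes "CARD('a) = 2 * m + 1" "x \<noteq> 0" "x \<notin> paley_set"
  shows "x ^ m = -1"
proof -
  have "(x ^ m) ^ 2 = 1"
    using power_CARD_minus_1[OF assms(2)] assms(1) by (simp add: power_mult[symmetric] mult.commute)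
  moreover have "x ^ m \<noteq> 1" using assms paley_set_eq_roots by blast
  ultimately show ?thesis by (auto simp: power2_eq_1_iff)
qed

lemma exists_nonresidue:
  assumes "odd CARD('a)"
  obtains g :: "'a::{finite,field}" where "g \<noteq> 0" "g \<notin> paley_set"
proof -
  obtain m where q: "CARD('a) = 2 * m + 1" using assms oddE by blast
  have m: "m \<ge> 1" using CARD_field_ge_2[where 'a='a] q by simp
  have "card (paley_set :: 'a set) < card {x::'a. x \<noteq> 0}"
    using card_power_eq_le[OF m, of "1::'a"] m q
    by (simp add: paley_set_eq_roots[OF q] card_nonzero_eq)
  hence "\<not> {x::'a. x \<noteq> 0} \<subseteq> paley_set" by (meson card_mono finite leD)
  thus ?thesis using that by blast
qed

section \<open>Linear subspaces\<close>

lemma finite_vecs: "finite (vecs k :: (nat \<Rightarrow> 'a::{finite,zero}) set)"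
proof -
  let ?f = "\<lambda>xs i. if i < k then xs ! i else (0::'a)"
  have "vecs k \<subseteq> ?f ` {xs. set xs \<subseteq> UNIV \<and> length xs = k}"
  proof
    fix v :: "nat \<Rightarrow> 'a" assume "v \<in> vecs k"
    hence "v = ?f (map v [0..<k])" by (auto simp: vecs_def)
    thus "v \<in> ?f ` {xs. set xs \<subseteq> UNIV \<and> length xs = k}" by force
  qed
  moreover have "finite {xs::'a list. set xs \<subseteq> UNIV \<and> length xs = k}"
    by (rule finite_lists_length_eq) simp
  ultimately show ?thesis by (rule finite_subset[OF _ finite_imageI])
qed

lemma lin_subspace_finite:
  "lin_subspace k (U :: (nat \<Rightarrow> 'a::{finite,field}) set) \<Longrightarrow> finite U"
  unfolding lin_subspace_def using finite_vecs finite_subset by blast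

lemma lin_subspace_add_scaled:
  assumes "lin_subspace k U" "u \<in> U" "e \<in> U"
  shows "(\<lambda>i. u i + t * e i) \<in> U"
  using assms unfolding lin_subspace_def by fast

lemma lin_subspace_split:
  fixes U :: "(nat \<Rightarrow> 'a::field) set"
  assumes U: "lin_subspace k U" "U \<noteq> {\<lambda>i. 0}"
  obtains W e where "lin_subspace k W" "bij_betw (\<lambda>(w, t) i. w i + t * e i) (W \<times> UNIV) U"
proof -
  obtain e where e: "e \<in> U" "e \<noteq> (\<lambda>i. 0)"
    using U unfolding lin_subspace_def by blast
  then obtain j where j: "e j \<noteq> 0" by (auto simp: fun_eq_iff)
  let ?W = "{u \<in> U. u j = 0}"
  let ?proj = "\<lambda>u. ((\<lambda>i. u i - (u j / e j) * e i), u j / e j)"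
  have "lin_subspace k ?W" using U(1) unfolding lin_subspace_def by auto
  moreover have "bij_betw (\<lambda>(w, t) i. w i + t * e i) (?W \<times> UNIV) U"
  proof (rule bij_betw_byWitness[where f'="?proj"])
    have "(\<lambda>i. u i + (- (u j / e j)) * e i) \<in> U" if "u \<in> U" for u
      by (rule lin_subspace_add_scaled[OF U(1) that e(1)])
    thus "?proj ` U \<subseteq> ?W \<times> UNIV" using j by auto
  qed (use j lin_subspace_add_scaled[OF U(1) _ e(1)] in \<open>auto simp: fun_eq_iff\<close>)
  ultimately show ?thesis using that by blast
qed

lemma card_lin_subspace_split:
  assumes "bij_betw (\<lambda>(w, t) i. w i + t * e i) (W \<times> (UNIV :: 'a::{finite,field} set)) U"
  shows "card U = card W * CARD('a)"
  using bij_betw_same_card[OF assms] by (simp add: card_cartesian_product)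

lemma card_lin_subspace:
  fixes U :: "(nat \<Rightarrow> 'a::{finite,field}) set"
  assumes "lin_subspace k U"
  shows "\<exists>d. card U = CARD('a) ^ d"
  using assms
proof (induction "card U" arbitrary: U rule: less_induct)
  case (less U)
  show ?case
  proof (cases "U = {\<lambda>i. 0}")
    case True
    thus ?thesis by (intro exI[of _ 0]) simp
  next
    case False
    then obtain W e where W: "lin_subspace k W"
      and bij: "bij_betw (\<lambda>(w, t) i. w i + t * e i) (W \<times> UNIV) U"
      using lin_subspace_split[OF less.prems] by blast
    have U: "card U = card W * CARD('a)" by (rule card_lin_subspace_split[OF bij])
    have "card W > 0"
      using W lin_subspace_finite[OF W] by (auto simp: lin_subspace_def card_gt_0_iff)
    hence "card W < card U" using U CARD_field_ge_2[where 'a='a] by simp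
    then obtain d where "card W = CARD('a) ^ d" using less.hyps W by blast
    hence "card U = CARD('a) ^ Suc d" using U by simp
    thus ?thesis by blast
  qed
qed

section \<open>Monomial sums over subspaces\<close>

lemma sum_line_monomial:
  fixes w e :: "nat \<Rightarrow> 'a::{finite,field}"
  assumes "finite A"
  shows "(\<Sum>t\<in>UNIV. \<Prod>r\<in>A. w (c r) + t * e (c r)) =
    (\<Sum>R\<in>Pow A. (\<Prod>r\<in>R. e (c r)) * (\<Sum>t\<in>UNIV. t ^ card R) * (\<Prod>r\<in>A - R. w (c r)))"
proof -
  have "(\<Sum>t\<in>UNIV. \<Prod>r\<in>A. w (c r) + t * e (c r)) =
      (\<Sum>t\<in>UNIV. \<Sum>R\<in>Pow A. (\<Prod>r\<in>R. t * e (c r)) * (\<Prod>r\<in>A - R. w (c r)))"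
    using prod_add[OF assms, of "\<lambda>r. t * e (c r)" "\<lambda>r. w (c r)" for t]
    by (simp add: add.commute)
  also have "\<dots> = (\<Sum>R\<in>Pow A. \<Sum>t\<in>UNIV. t ^ card R * (\<Prod>r\<in>R. e (c r)) * (\<Prod>r\<in>A - R. w (c r)))"
    by (subst sum.swap) (simp add: prod.distrib)
  finally show ?thesis by (simp add: sum_distrib_left sum_distrib_right mult_ac)
qed

lemma sum_lin_subspace_monomial_eq_0:
  fixes U :: "(nat \<Rightarrow> 'a::{finite,field}) set" and c :: "'b \<Rightarrow> nat"
  assumes "lin_subspace k U" "card U = CARD('a) ^ d"
    and "finite A" "card A < d * (CARD('a) - 1)"
  shows "(\<Sum>u\<in>U. \<Prod>r\<in>A. u (c r)) = 0"
  using assms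
proof (induction d arbitrary: U A)
  case 0
  thus ?case by simp
next
  case (Suc d)
  have "CARD('a) \<le> CARD('a) ^ Suc d"
    by (rule self_le_power) (use CARD_field_ge_2[where 'a='a] in auto)
  hence "card U \<ge> 2" using Suc.prems(2) CARD_field_ge_2[where 'a='a] by linarith
  hence "U \<noteq> {\<lambda>i. 0}" by auto
  then obtain W e where W: "lin_subspace k W"
    and bij: "bij_betw (\<lambda>(w, t) i. w i + t * e i) (W \<times> UNIV) U"
    using lin_subspace_split[OF Suc.prems(1)] by blast
  have card_W: "card W = CARD('a) ^ d"
    using card_lin_subspace_split[OF bij] Suc.prems(2) CARD_field_ge_2[where 'a='a] by simp
  have term_eq_0: "(\<Prod>r\<in>R. e (c r)) * (\<Sum>t\<in>UNIV. t ^ card R) * (\<Sum>w\<in>W. \<Prod>r\<in>A - R. w (c r)) = 0"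
    if R: "R \<subseteq> A" for R
  proof (cases "card R < CARD('a) - 1")
    case True
    thus ?thesis by (simp add: sum_power_eq_0)
  next
    case False
    have "card (A - R) = card A - card R" "card R \<le> card A"
      using R Suc.prems(3) by (auto intro: card_Diff_subset card_mono finite_subset)
    moreover have "card A < (CARD('a) - 1) + d * (CARD('a) - 1)"
      using Suc.prems(4) by simp
    ultimately have "card (A - R) < d * (CARD('a) - 1)"
      using False by linarith
    thus ?thesis using Suc.IH[OF W card_W] Suc.prems(3) by simp
  qed
  have "(\<Sum>u\<in>U. \<Prod>r\<in>A. u (c r)) = (\<Sum>w\<in>W. \<Sum>t\<in>UNIV. \<Prod>r\<in>A. w (c r) + t * e (c r))"
    by (simp add: sum.reindex_bij_betw[OF bij, symmetric] sum.cartesian_product split_def)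
  also have "\<dots> = (\<Sum>w\<in>W. \<Sum>R\<in>Pow A. (\<Prod>r\<in>R. e (c r)) * (\<Sum>t\<in>UNIV. t ^ card R)
                     * (\<Prod>r\<in>A - R. w (c r)))"
    by (simp add: sum_line_monomial[OF Suc.prems(3)])
  also have "\<dots> = (\<Sum>R\<in>Pow A. (\<Prod>r\<in>R. e (c r)) * (\<Sum>t\<in>UNIV. t ^ card R)
                     * (\<Sum>w\<in>W. \<Prod>r\<in>A - R. w (c r)))"
    by (subst sum.swap) (simp add: sum_distrib_left)
  also have "\<dots> = 0" using term_eq_0 by (intro sum.neutral) blast
  finally show ?case .
qed

lemma prod_one_plus_power:
  fixes x :: "nat \<Rightarrow> 'a::comm_ring_1"
  assumes "finite I"
  shows "(\<Prod>i\<in>I. 1 + x i ^ m) = (\<Sum>X\<in>Pow I. \<Prod>p\<in>(I - X) \<times> {..<m}. x (fst p))"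
proof -
  have "(\<Prod>i\<in>I. 1 + x i ^ m) = (\<Sum>X\<in>Pow I. (\<Prod>i\<in>X. 1) * (\<Prod>i\<in>I - X. x i ^ m))"
    by (rule prod_add[OF assms])
  also have "\<dots> = (\<Sum>X\<in>Pow I. \<Prod>p\<in>(I - X) \<times> {..<m}. x (fst p))"
  proof (rule sum.cong[OF refl])
    fix X
    have "(\<Prod>p\<in>(I - X) \<times> {..<m}. x (fst p)) = (\<Prod>i\<in>I - X. \<Prod>j<m. x i)"
      by (subst prod.cartesian_product) (simp add: split_def)
    thus "(\<Prod>i\<in>X. 1) * (\<Prod>i\<in>I - X. x i ^ m) = (\<Prod>p\<in>(I - X) \<times> {..<m}. x (fst p))"
      by simp
  qed
  finally show ?thesis .
qed

lemma sum_lin_subspace_prod_one_plus_power_eq_0: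
  fixes U :: "(nat \<Rightarrow> 'a::{finite,field}) set"
  assumes "lin_subspace k U" "card U = CARD('a) ^ d"
    and "finite I" "card I * m < d * (CARD('a) - 1)"
  shows "(\<Sum>u\<in>U. \<Prod>i\<in>I. 1 + u i ^ m) = 0"
proof -
  have monomial_eq_0: "(\<Sum>u\<in>U. \<Prod>p\<in>(I - X) \<times> {..<m}. u (fst p)) = 0" for X
  proof (rule sum_lin_subspace_monomial_eq_0[OF assms(1,2)])
    have "card ((I - X) \<times> {..<m}) \<le> card I * m"
      using assms(3) by (simp add: card_cartesian_product card_mono)
    thus "card ((I - X) \<times> {..<m}) < d * (CARD('a) - 1)" using assms(4) by linarith
  qed (use assms(3) in simp)
  have "(\<Sum>u\<in>U. \<Prod>i\<in>I. 1 + u i ^ m) = (\<Sum>X\<in>Pow I. \<Sum>u\<in>U. \<Prod>p\<in>(I - X) \<times> {..<m}. u (fst p))"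
    by (simp add: prod_one_plus_power[OF assms(3)] sum.swap[of _ U])
  also have "\<dots> = 0" by (simp add: monomial_eq_0)
  finally show ?thesis .
qed

section \<open>The linear independence number of the Paley graph\<close>

lemma alpha_lin_is_max:
  fixes S :: "'a::{finite,field} set"
  shows "\<exists>U. lin_subspace k U \<and> indep_set S k U \<and> card U = alpha_lin S k"
    and "lin_subspace k U \<Longrightarrow> indep_set S k U \<Longrightarrow> card U \<le> alpha_lin S k"
proof -
  let ?C = "{card U | U. lin_subspace k U \<and> indep_set S k (U :: (nat \<Rightarrow> 'a) set)}"
  have "?C \<subseteq> {..card (vecs k :: (nat \<Rightarrow> 'a) set)}"
    by (auto simp: lin_subspace_def intro!: card_mono finite_vecs)
  hence fin: "finite ?C" by (rule finite_subset) simp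
  have "lin_subspace k {\<lambda>i. 0::'a}" "indep_set S k {\<lambda>i. 0::'a}"
    by (simp_all add: lin_subspace_def vecs_def indep_set_def strong_adj_def)
  hence ne: "?C \<noteq> {}" by blast
  show "\<exists>U. lin_subspace k U \<and> indep_set S k U \<and> card U = alpha_lin S k"
    using Max_in[OF fin ne] unfolding alpha_lin_def by auto
  show "lin_subspace k U \<Longrightarrow> indep_set S k U \<Longrightarrow> card U \<le> alpha_lin S k"
    unfolding alpha_lin_def by (rule Max_ge[OF fin]) blast
qed

lemma paley_indep_lin_subspace_dim_le:
  fixes U :: "(nat \<Rightarrow> 'a::{finite,field}) set"
  assumes q: "CARD('a) = 2 * m + 1"
    and U: "lin_subspace k U" "indep_set paley_set k U" "card U = CARD('a) ^ d"
  shows "2 * d \<le> k"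
proof (rule ccontr)
  assume "\<not> 2 * d \<le> k"
  hence "card {..<k} * m < d * (CARD('a) - 1)"
    using q CARD_field_ge_2[where 'a='a] by simp
  hence sum_eq_0: "(\<Sum>u\<in>U. \<Prod>i<k. 1 + u i ^ m) = 0"
    by (rule sum_lin_subspace_prod_one_plus_power_eq_0[OF U(1,3) finite_lessThan])
  have m: "m \<ge> 1" using CARD_field_ge_2[where 'a='a] q by simp
  have zero: "(\<lambda>i. 0) \<in> U" and fin: "finite U"
    using U(1) lin_subspace_finite by (auto simp: lin_subspace_def)
  have vanish: "(\<Prod>i<k. 1 + u i ^ m) = 0" if u: "u \<in> U - {\<lambda>i. 0}" for u
  proof -
    have "\<not> strong_adj paley_set k u (\<lambda>i. 0)"
      using U(2) u zero unfolding indep_set_def by blast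
    then obtain i where "i < k" "u i \<noteq> 0" "u i \<notin> paley_set"
      using u unfolding strong_adj_def by auto
    thus ?thesis using power_half_nonresidue[OF q] by (intro prod_zero) force+
  qed
  have "(\<Sum>u\<in>U. \<Prod>i<k. 1 + u i ^ m)
      = (\<Prod>i<k. 1 + (0::'a) ^ m) + (\<Sum>u\<in>U - {\<lambda>i. 0}. \<Prod>i<k. 1 + u i ^ m)"
    by (rule sum.remove[OF fin zero])
  also have "\<dots> = 1" using m by (simp add: sum.neutral vanish zero_power)
  finally show False using sum_eq_0 by simp
qed

lemma alpha_lin_paley_le:
  assumes "odd (card (UNIV :: 'a::{finite,field} set))"
  shows "alpha_lin (paley_set :: 'a set) k ^ 2 \<le> CARD('a) ^ k"
proof -
  obtain m where q: "CARD('a) = 2 * m + 1" using assms oddE by blast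
  obtain U :: "(nat \<Rightarrow> 'a) set"
    where U: "lin_subspace k U" "indep_set paley_set k U" "card U = alpha_lin (paley_set :: 'a set) k"
    using alpha_lin_is_max(1) by blast
  obtain d where d: "card U = CARD('a) ^ d" using card_lin_subspace[OF U(1)] by blast
  have "2 * d \<le> k" by (rule paley_indep_lin_subspace_dim_le[OF q U(1,2) d])
  hence "CARD('a) ^ (2 * d) \<le> CARD('a) ^ k"
    using CARD_field_ge_2[where 'a='a] by (intro power_increasing) auto
  moreover have "alpha_lin (paley_set :: 'a set) k ^ 2 = CARD('a) ^ (2 * d)"
    using U(3) d by (simp add: power_mult mult.commute)
  ultimately show ?thesis by simp
qed

text \<open>On the line \<open>{(x, gx)}\<close> a difference \<open>(s, gs)\<close> with both coordinates squares would make
  the non-residue \<open>g\<close> a square.\<close>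

lemma alpha_lin_paley_2:
  assumes "odd (card (UNIV :: 'a::{finite,field} set))"
  shows "alpha_lin (paley_set :: 'a set) 2 = CARD('a)"
proof (rule antisym)
  show "alpha_lin (paley_set :: 'a set) 2 \<le> CARD('a)"
    using alpha_lin_paley_le[OF assms, of 2] by (simp add: power2_nat_le_eq_le)
  obtain g :: 'a where g: "g \<noteq> 0" "g \<notin> paley_set" using exists_nonresidue[OF assms] by blast
  define f where "f = (\<lambda>(x::'a) (i::nat). if i = 0 then x else if i = 1 then g * x else 0)"
  have f_add: "(\<lambda>i. f x i + f y i) = f (x + y)" and f_scale: "(\<lambda>i. c * f x i) = f (c * x)" for x y c
    by (auto simp: f_def fun_eq_iff algebra_simps)
  have lin: "lin_subspace 2 (range f)"
    unfolding lin_subspace_def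
    by (auto simp: f_add f_scale, auto simp: f_def vecs_def intro!: range_eqI[where x=0])
  have ind: "indep_set paley_set 2 (range f)"
    unfolding indep_set_def strong_adj_def
  proof (clarify)
    fix x y assume "f x \<noteq> f y" and adj: "\<forall>i<2. f x i = f y i \<or> f x i - f y i \<in> paley_set"
    hence xy: "x \<noteq> y" by auto
    obtain s where s: "x - y = s ^ 2"
      using adj[rule_format, of 0] xy by (auto simp: f_def paley_set_def)
    obtain r where r: "g * (x - y) = r ^ 2"
      using adj[rule_format, of 1] xy g by (auto simp: f_def paley_set_def algebra_simps)
    have "s \<noteq> 0" using s xy by auto
    hence "g = (r / s) ^ 2" using r s by (simp add: field_simps power2_eq_square)
    thus False using g by (auto simp: paley_set_def)
  qed
  have "inj f" by (rule injI) (simp add: f_def fun_eq_iff, metis)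
  hence "card (range f) = CARD('a)" by (simp add: card_image)
  thus "CARD('a) \<le> alpha_lin (paley_set :: 'a set) 2"
    using alpha_lin_is_max(2)[OF lin ind] by simp
qed

section \<open>Linear Shannon capacity\<close>

lemma powr_inverse_le_sqrt:
  fixes a b :: real
  assumes "0 \<le> a" "0 \<le> b" "k \<ge> 1" "a ^ 2 \<le> b ^ k"
  shows "a powr (1 / real k) \<le> sqrt b"
proof (rule real_le_rsqrt)
  have "a powr (1 / real k) = root k a" using assms by (simp add: root_powr_inverse)
  hence "(a powr (1 / real k)) ^ 2 = root k (a ^ 2)" using assms by (subst real_root_power) auto
  also have "\<dots> \<le> root k (b ^ k)" using assms by (simp add: real_root_le_mono)
  also have "\<dots> = b" using assms by (simp add: real_root_pos2)
  finally show "(a powr (1 / real k)) ^ 2 \<le> b" .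
qed

lemma Theta_lin_eq_sqrt:
  fixes S :: "'a::field set"
  assumes upper: "\<And>k. alpha_lin S k ^ 2 \<le> Q ^ k" and at_2: "alpha_lin S 2 = Q"
  shows "Theta_lin S = sqrt (real Q)"
proof -
  let ?f = "\<lambda>k. real (alpha_lin S k) powr (1 / real k)"
  have le: "?f k \<le> sqrt (real Q)" if "k \<in> {1..}" for k
    using that upper[of k] by (intro powr_inverse_le_sqrt) (auto simp flip: of_nat_power)
  have "?f 2 = sqrt (real Q)" using at_2 by (simp add: powr_half_sqrt)
  hence "(SUP k\<in>{1..}. ?f k) = sqrt (real Q)"
    using le by (intro antisym cSUP_least cSUP_upper2[where x=2] bdd_aboveI2) auto
  thus ?thesis unfolding Theta_lin_def .
qed

lemma Theta_lin_paley:
  assumes "odd (card (UNIV :: 'a::{finite,field} set))"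
  shows "Theta_lin (paley_set :: 'a set) = sqrt CARD('a)"
  using assms by (intro Theta_lin_eq_sqrt alpha_lin_paley_le alpha_lin_paley_2)

lemma paley_set_card_5:
  assumes "card (UNIV :: 'a::{finite,field} set) = 5"
  shows "(paley_set :: 'a set) = {1, -1}"
proof -
  have "(paley_set :: 'a set) = {x. x ^ 2 = 1}" by (rule paley_set_eq_roots) (simp add: assms)
  thus ?thesis by (auto simp: power2_eq_1_iff)
qed

theorem mainTheorem5:
  shows "(card (UNIV :: 'a::{finite,field} set) mod 4 = 1 \<longrightarrow>
            Theta_lin (paley_set :: 'a set) = sqrt (real (card (UNIV :: 'a set))))
       \<and> (card (UNIV :: 'b::{finite,field} set) = 5 \<longrightarrow>
            Theta_lin ({1, -1} :: 'b set) = sqrt 5)"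
proof (intro conjI impI)
  show "Theta_lin (paley_set :: 'a set) = sqrt CARD('a)" if "CARD('a) mod 4 = 1"
    using that by (intro Theta_lin_paley) presburger
  show "Theta_lin ({1, -1} :: 'b set) = sqrt 5" if "CARD('b) = 5"
    using that Theta_lin_paley[where 'a='b] by (simp add: paley_set_card_5)
qed

end
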